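(* Set $L = (n-1)(r-1) +1$. Then the following equality holds in $E_n(L)$: \begin{equation*} \sum_{k = 0}^L(-1)^k\begin{bmatrix} L \\ k \end{bmatrix}(k, 0, \dots, 0, L - k) = 0. \end{equation*}
   Context: Let $q$ be an indeterminate, $[n] = \frac{q^n - q^{-n}}{q - q^{-1}}$ for $n \in \mathbb{Z}$, $[m]^! = [1]\cdots[m]$, and for $n \in \mathbb{Z}$, $m \in \mathbb{N}$, $\begin{bmatrix} n \\ m\end{bmatrix} = \frac{[n][n-1]\cdots[n-m+1]}{[m]^!}$ for $m \ge 1$, $\begin{bmatrix} n \\ 0\end{bmatrix} = 1$. Fix an integer $r \ge 2$ and $n \ge 2$. Let $V_n$ be the vector space over $\mathbb{Q}(q)$ spanned by symbols $a = (a_1, \dots, a_n) \in \mathbb{N}^n$ subject to the relations: for $1 \le i \le n-1$, if $a_i \ge r$ then $\sum_{0 \le j \le r}(-1)^j\begin{bmatrix} r \\ j\end{bmatrix} a(j) = 0$, where $a(j) = (a_1, \dots, a_{i-1}, a_i - j, a_{i+1} + j, a_{i+2}, \dots, a_n)$. For $m \ge 1$, $E_n(m)$ denotes the subspace of $V_n$ spanned by $\{ a = (a_1, \dots, a_n) \mid \sum_i a_i = m,\ a_i \in [0, r-1] \text{ for } 1 \le i < n\}$; every $a \in V_n$ with $\sum a_i = m$ lies in $E_n(m)$. *)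

theory Defs
  imports "HOL-Computational_Algebra.Polynomial" "HOL-Computational_Algebra.Fraction_Field"
begin

type_synonym qfield = "rat poly fract"

definition qq :: qfield where "qq = Fract [:0, 1:] 1"

definition qint :: "int \<Rightarrow> qfield" where
  "qint k = (qq powi k - qq powi (-k)) / (qq - inverse qq)"

definition qfact :: "nat \<Rightarrow> qfield" where
  "qfact m = (\<Prod>t\<in>{1..m}. qint (int t))"

definition qbinom :: "int \<Rightarrow> nat \<Rightarrow> qfield" where
  "qbinom k m = (if m = 0 then 1 else (\<Prod>t<m. qint (k - int t)) / qfact m)"

text \<open>Symbols a in N^n are lists of length n; positions are 0-indexed, so the
  paper's index i (1 \<le> i \<le> n-1) corresponds to i-1 here.
  a(j) = (a_1,...,a_i - j, a_{i+1} + j, ..., a_n).\<close>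
definition shift :: "nat list \<Rightarrow> nat \<Rightarrow> nat \<Rightarrow> nat list" where
  "shift a i j = a[i := a ! i - j, Suc i := a ! Suc i + j]"

text \<open>Formal linear combinations of symbols are functions nat list \<Rightarrow> Q(q)
  (finitely supported in all uses below). The defining relation for (a,i):\<close>
definition rel_vec :: "nat \<Rightarrow> nat list \<Rightarrow> nat \<Rightarrow> nat list \<Rightarrow> qfield" where
  "rel_vec r a i = (\<lambda>b. \<Sum>j\<le>r. (-1) ^ j * qbinom (int r) j * (if b = shift a i j then 1 else 0))"

definition valid_rel :: "nat \<Rightarrow> nat \<Rightarrow> nat list \<Rightarrow> nat \<Rightarrow> bool" where
  "valid_rel n r a i \<longleftrightarrow> length a = n \<and> Suc i < n \<and> r \<le> a ! i"

definition zero_in_V :: "nat \<Rightarrow> nat \<Rightarrow> (nat list \<Rightarrow> qfield) \<Rightarrow> bool" where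
  "zero_in_V n r v \<longleftrightarrow> (\<exists>G c. finite G \<and> (\<forall>(a, i)\<in>G. valid_rel n r a i) \<and>
      (\<forall>b. v b = (\<Sum>(a, i)\<in>G. c (a, i) * rel_vec r a i b)))"

end

(*
  Read a polynomial in X and Y as a formal combination of symbols relative to a base symbol v:
  X^s Y^t stands for v with s units moved from the first slot to the second and then t units from
  the second slot to the last.  By the q-binomial theorem the product
  (1 - q^e z)(1 - q^(e+2) z)...(1 - q^(e+2c-2) z) with e = 1 - c has the coefficients (-1)^j [c j].
  Hence for z = X it encodes the defining relation at the first slot, for z = Y the relation of
  length b between the second and the last slot (known by induction on the number of slots), and
  for z = XY the wanted relation of length a + b - 1 between the first and the last slot.
  The factorisation 1 - q^(e+f) XY = (1 - q^e X) + q^e X (1 - q^f Y) shows, by induction on a + b,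
  that the XY-product of length a + b - 1 is a combination of the X-product of length a and the
  Y-product of length b, with cofactors supported where these relations are applicable.
  Taking a = r passes from n - 1 slots with b = (n-2)(r-1)+1 to n slots with a + b - 1 = L;
  reversing the summation index gives the stated form.
*)
theory Submission
  imports Defs
begin

lemma qq_nonzero: "qq \<noteq> 0"
  unfolding qq_def by (simp add: eq_fract Zero_fract_def)

lemma qq_power_neq_1:
  assumes "0 < m"
  shows "qq ^ m \<noteq> 1"
proof
  have "qq ^ m = Fract ([:0, 1:] ^ m) 1"
    unfolding qq_def by (induction m) (simp_all add: mult.commute One_fract_def)
  also assume "qq ^ m = 1"
  finally have "([:0, 1:] :: rat poly) ^ m = 1"
    by (simp add: eq_fract One_fract_def)
  then have "degree (([:0, 1:] :: rat poly) ^ m) = 0" by simp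
  with assms show False by (simp add: degree_power_eq)
qed

lemma qq_minus_inverse_nonzero: "qq - inverse qq \<noteq> 0"
proof
  assume "qq - inverse qq = 0"
  then have "qq ^ 2 = 1"
    using qq_nonzero by (simp add: power2_eq_square field_simps)
  with qq_power_neq_1[of 2] show False by simp
qed

lemma qq_powi_add: "qq powi (a + b) = qq powi a * qq powi b"
  using qq_nonzero by (simp add: power_int_add)

lemma qint_0 [simp]: "qint 0 = 0"
  by (simp add: qint_def)

lemma qint_nonzero:
  assumes "0 < k"
  shows "qint k \<noteq> 0"
proof
  assume "qint k = 0"
  then have "qq powi k = qq powi (- k)"
    using qq_minus_inverse_nonzero by (simp add: qint_def)
  then have "qq powi (k + k) = qq powi (- k + k)"
    by (simp only: qq_powi_add)
  then have "qq powi (k + k) = 1" by simp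
  then have "qq ^ nat (k + k) = 1"
    using assms by (simp add: power_int_def)
  with qq_power_neq_1[of "nat (k + k)"] assms show False by simp
qed

lemma qint_add: "qint (a + b) = qq powi (- b) * qint a + qq powi a * qint b"
proof -
  have "qq powi (a + b) - qq powi (- (a + b))
      = qq powi (- b) * (qq powi a - qq powi (- a)) + qq powi a * (qq powi b - qq powi (- b))"
    unfolding minus_add_distrib qq_powi_add by (simp add: algebra_simps)
  then show ?thesis
    unfolding qint_def by (simp add: add_divide_distrib[symmetric])
qed

lemma qfact_Suc: "qfact (Suc m) = qfact m * qint (int m + 1)"
  by (simp add: qfact_def add.commute)

lemma qfact_nonzero: "qfact m \<noteq> 0"
  by (induction m) (simp_all add: qfact_def qfact_Suc qint_nonzero)

lemma qbinom_0 [simp]: "qbinom k 0 = 1"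
  by (simp add: qbinom_def)

lemma qbinom_eq_prod_div_qfact: "qbinom k m = (\<Prod>t<m. qint (k - int t)) / qfact m"
  by (simp add: qbinom_def qfact_def)

lemma qbinom_eq_0:
  assumes "c < m"
  shows "qbinom (int c) m = 0"
proof -
  have "(\<Prod>t<m. qint (int c - int t)) = 0"
    using assms by (intro prod_zero bexI[of _ c]) simp_all
  then show ?thesis by (simp add: qbinom_eq_prod_div_qfact)
qed

lemma qbinom_Suc_Suc:
  "qbinom (int c + 1) (Suc i)
     = qq powi (- (int i + 1)) * qbinom (int c) (Suc i) + qq powi (int c - int i) * qbinom (int c) i"
proof -
  define P where "P = (\<Prod>t<i. qint (int c - int t))"
  have top: "(\<Prod>t<Suc i. qint (int c + 1 - int t)) = qint (int c + 1) * P"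
    unfolding P_def by (subst prod.lessThan_Suc_shift) (simp add: algebra_simps)
  have "qint (int c + 1) = qq powi (- (int i + 1)) * qint (int c - int i) + qq powi (int c - int i) * qint (int i + 1)"
    using qint_add[of "int c - int i" "int i + 1"] by simp
  moreover have "qfact i \<noteq> 0" "qint (int i + 1) \<noteq> 0"
    using qfact_nonzero qint_nonzero by simp_all
  ultimately show ?thesis
    unfolding qbinom_eq_prod_div_qfact top qfact_Suc
    by (simp add: P_def field_simps)
qed

lemma prod_qint_mult_qfact:
  "m \<le> c \<Longrightarrow> (\<Prod>t<m. qint (int c - int t)) * qfact (c - m) = qfact c"
proof (induction m)
  case (Suc m)
  then have "c - m = Suc (c - Suc m)" "int (c - Suc m) + 1 = int c - int m" by simp_all
  then have "qfact (c - m) = qfact (c - Suc m) * qint (int c - int m)"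
    by (simp only: qfact_Suc)
  with Suc show ?case by (simp add: mult_ac)
qed simp

lemma qbinom_qfact: "m \<le> c \<Longrightarrow> qbinom (int c) m = qfact c / (qfact m * qfact (c - m))"
  using prod_qint_mult_qfact[of m c] qfact_nonzero[of "c - m"] qfact_nonzero[of m]
  by (simp add: qbinom_eq_prod_div_qfact field_simps)

lemma qbinom_symmetric: "m \<le> c \<Longrightarrow> qbinom (int c) (c - m) = qbinom (int c) m"
  by (simp add: qbinom_qfact mult.commute)

section \<open>The q-binomial theorem\<close>

definition qpoch_poly :: "'a::field \<Rightarrow> int \<Rightarrow> nat \<Rightarrow> 'a poly" where
  "qpoch_poly q e c = (\<Prod>k<c. [:1, - (q powi (e + 2 * int k)):])"

lemma qpoch_poly_0 [simp]: "qpoch_poly q e 0 = 1"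
  by (simp add: qpoch_poly_def)

lemma qpoch_poly_Suc:
  "qpoch_poly q e (Suc c) = qpoch_poly q e c + pCons 0 (smult (- (q powi (e + 2 * int c))) (qpoch_poly q e c))"
  by (simp add: qpoch_poly_def)

theorem coeff_qpoch_poly:
  "coeff (qpoch_poly qq e c) j = (- 1) ^ j * qq powi (int j * (e + int c - 1)) * qbinom (int c) j"
proof (induction c arbitrary: j)
  case 0
  then show ?case by (cases j) (simp_all add: qpoch_poly_def qbinom_eq_0[of 0, simplified])
next
  case (Suc c)
  show ?case
  proof (cases j)
    case 0
    with Suc show ?thesis by (simp add: qpoch_poly_Suc)
  next
    case (Suc i)
    have "coeff (qpoch_poly qq e (Suc c)) j
        = (- 1) ^ j * (qq powi (int j * (e + int c - 1)) * qbinom (int c) j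
            + qq powi (e + 2 * int c) * qq powi (int i * (e + int c - 1)) * qbinom (int c) i)"
      using Suc.IH by (simp add: qpoch_poly_Suc Suc algebra_simps)
    also have "\<dots> = (- 1) ^ j * qq powi (int j * (e + int (Suc c) - 1))
        * (qq powi (- (int i + 1)) * qbinom (int c) j + qq powi (int c - int i) * qbinom (int c) i)"
      unfolding Suc by (simp add: qq_powi_add[symmetric] algebra_simps)
    also have "\<dots> = (- 1) ^ j * qq powi (int j * (e + int (Suc c) - 1)) * qbinom (int (Suc c)) j"
      using qbinom_Suc_Suc[of c i] by (simp add: Suc add.commute)
    finally show ?thesis .
  qed
qed

corollary coeff_qpoch_poly_balanced:
  "coeff (qpoch_poly qq (1 - int c) c) j = (- 1) ^ j * qbinom (int c) j"
  by (simp add: coeff_qpoch_poly)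

lemma degree_qpoch_poly: "degree (qpoch_poly q e c) \<le> c"
proof -
  have "degree (qpoch_poly q e c) \<le> sum (degree \<circ> (\<lambda>k. [:1, - (q powi (e + 2 * int k)):])) {..<c}"
    unfolding qpoch_poly_def by (rule degree_prod_sum_le) simp
  also have "\<dots> \<le> (\<Sum>k<c. 1)" by (intro sum_mono) simp
  finally show ?thesis by simp
qed

lemma coeff_qpoch_poly_nonzero_le: "coeff (qpoch_poly q e c) j \<noteq> 0 \<Longrightarrow> j \<le> c"
  using le_degree degree_qpoch_poly order_trans by blast

section \<open>Bivariate polynomials\<close>

text \<open>\<open>X2\<close> is the variable of the inner polynomial ring, \<open>Y2\<close> that of the outer one, and
  \<open>coeff2 p s t\<close> is the coefficient of \<open>X2\<^sup>s Y2\<^sup>t\<close>.\<close>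

definition coeff2 :: "'a::zero poly poly \<Rightarrow> nat \<Rightarrow> nat \<Rightarrow> 'a" where
  "coeff2 p s t = coeff (coeff p t) s"

definition supp2 :: "'a::zero poly poly \<Rightarrow> (nat \<times> nat) set" where
  "supp2 p = {(s, t). coeff2 p s t \<noteq> 0}"

definition X2 :: "'a::comm_semiring_1 poly poly" where
  "X2 = [:[:0, 1:]:]"

definition Y2 :: "'a::comm_semiring_1 poly poly" where
  "Y2 = [:0, 1:]"

definition const2 :: "'a::zero \<Rightarrow> 'a poly poly" where
  "const2 c = [:[:c:]:]"

definition monom2 :: "nat \<Rightarrow> nat \<Rightarrow> 'a::comm_semiring_1 poly poly" where
  "monom2 i k = X2 ^ i * Y2 ^ k"

lemma coeff2_0 [simp]: "coeff2 0 s t = 0"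
  by (simp add: coeff2_def)

lemma coeff2_1: "coeff2 1 s t = (if s = 0 \<and> t = 0 then 1 else 0)"
  by (simp add: coeff2_def)

lemma coeff2_add [simp]: "coeff2 (p + q) s t = coeff2 p s t + coeff2 q s t"
  by (simp add: coeff2_def)

lemma coeff2_diff [simp]: "coeff2 (p - q) s t = coeff2 p s t - coeff2 q s t"
  by (simp add: coeff2_def)

lemma coeff2_sum: "coeff2 (\<Sum>x\<in>A. f x) s t = (\<Sum>x\<in>A. coeff2 (f x) s t)"
  by (simp add: coeff2_def coeff_sum)

lemma coeff2_const2_mult [simp]: "coeff2 (const2 c * p) s t = c * coeff2 p s t"
  by (simp add: coeff2_def const2_def)

lemma coeff2_X2_mult [simp]: "coeff2 (X2 * p) s t = (if s = 0 then 0 else coeff2 p (s - 1) t)"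
  by (cases s) (simp_all add: coeff2_def X2_def coeff_pCons)

lemma coeff2_Y2_mult [simp]: "coeff2 (Y2 * p) s t = (if t = 0 then 0 else coeff2 p s (t - 1))"
  by (cases t) (simp_all add: coeff2_def Y2_def)

lemma coeff2_monom2_mult:
  "coeff2 (monom2 i k * p) s t = (if i \<le> s \<and> k \<le> t then coeff2 p (s - i) (t - k) else 0)"
proof -
  have Y: "coeff2 (Y2 ^ k * p) s t = (if k \<le> t then coeff2 p s (t - k) else 0)" for s t
    by (induction k arbitrary: t) (auto simp: mult.assoc)
  have "coeff2 (X2 ^ i * p') s t = (if i \<le> s then coeff2 p' (s - i) t else 0)"
    for p' :: "'a poly poly" and s
    by (induction i arbitrary: s) (auto simp: mult.assoc)
  then show ?thesis by (simp add: monom2_def mult.assoc Y)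
qed

lemma coeff2_monom2: "coeff2 (monom2 i k) s t = (if s = i \<and> t = k then 1 else 0)"
  by (simp add: coeff2_monom2_mult[where p = 1, unfolded mult_1_right] coeff2_1)

lemma poly2_eqI: "(\<And>s t. coeff2 p s t = coeff2 q s t) \<Longrightarrow> p = q"
  unfolding coeff2_def by (intro poly_eqI) auto

lemma poly2_monom2_expansion:
  assumes "finite \<Omega>" "supp2 p \<subseteq> \<Omega>"
  shows "p = (\<Sum>(s, t)\<in>\<Omega>. const2 (coeff2 p s t) * monom2 s t)"
proof (rule poly2_eqI)
  fix s t
  have "coeff2 (\<Sum>(s', t')\<in>\<Omega>. const2 (coeff2 p s' t') * monom2 s' t') s t
      = (\<Sum>x\<in>\<Omega>. if x = (s, t) then coeff2 p s t else 0)"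
    unfolding coeff2_sum by (intro sum.cong) (auto simp: coeff2_monom2 split: if_splits)
  also have "\<dots> = coeff2 p s t"
    using assms by (auto simp: supp2_def)
  finally show "coeff2 p s t = coeff2 (\<Sum>(s', t')\<in>\<Omega>. const2 (coeff2 p s' t') * monom2 s' t') s t" ..
qed

definition qpoch2 :: "'a::field \<Rightarrow> 'a poly poly \<Rightarrow> int \<Rightarrow> nat \<Rightarrow> 'a poly poly" where
  "qpoch2 q z e c = (\<Prod>k<c. 1 - const2 (q powi (e + 2 * int k)) * z)"

lemma qpoch2_0 [simp]: "qpoch2 q z e 0 = 1"
  by (simp add: qpoch2_def)

lemma qpoch2_Suc_shift: "qpoch2 q z e (Suc c) = (1 - const2 (q powi e) * z) * qpoch2 q z (e + 2) c"
  unfolding qpoch2_def by (subst prod.lessThan_Suc_shift) (simp add: algebra_simps)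

lemma qpoch2_Suc: "qpoch2 q z e (Suc c) = qpoch2 q z e c - const2 (q powi (e + 2 * int c)) * (z * qpoch2 q z e c)"
  by (simp add: qpoch2_def algebra_simps)

lemma coeff2_qpoch2_X2:
  "coeff2 (qpoch2 q X2 e c) s t = (if t = 0 then coeff (qpoch_poly q e c) s else 0)"
  by (induction c arbitrary: s) (auto simp: qpoch2_Suc qpoch_poly_Suc coeff2_1 coeff_pCons split: nat.split)

lemma coeff2_qpoch2_Y2:
  "coeff2 (qpoch2 q Y2 e c) s t = (if s = 0 then coeff (qpoch_poly q e c) t else 0)"
  by (induction c arbitrary: t) (auto simp: qpoch2_Suc qpoch_poly_Suc coeff2_1 coeff_pCons split: nat.split)

lemma coeff2_qpoch2_X2Y2:
  "coeff2 (qpoch2 q (X2 * Y2) e c) s t = (if s = t then coeff (qpoch_poly q e c) s else 0)"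
  by (induction c arbitrary: s t) (auto simp: qpoch2_Suc qpoch_poly_Suc coeff2_1 coeff_pCons mult.assoc split: nat.split)

lemma coeff2_eq_0_if_not_in_supp2: "supp2 p \<subseteq> S \<Longrightarrow> (s, t) \<notin> S \<Longrightarrow> coeff2 p s t = 0"
  by (auto simp: supp2_def)

lemma supp2_monom2_mult: "supp2 (monom2 i k * p) = (\<lambda>(s, t). (s + i, t + k)) ` supp2 p"
  by (force simp: supp2_def coeff2_monom2_mult image_iff split: if_splits)

lemma supp2_qpoch2_X2: "supp2 (qpoch2 q X2 e c) \<subseteq> (\<lambda>j. (j, 0)) ` {..c}"
  by (auto simp: supp2_def coeff2_qpoch2_X2 split: if_splits dest: coeff_qpoch_poly_nonzero_le)

lemma supp2_qpoch2_Y2: "supp2 (qpoch2 q Y2 e c) \<subseteq> (\<lambda>j. (0, j)) ` {..c}"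
  by (auto simp: supp2_def coeff2_qpoch2_Y2 split: if_splits dest: coeff_qpoch_poly_nonzero_le)

lemma supp2_qpoch2_X2Y2: "supp2 (qpoch2 q (X2 * Y2) e c) \<subseteq> (\<lambda>j. (j, j)) ` {..c}"
  by (auto simp: supp2_def coeff2_qpoch2_X2Y2 split: if_splits dest: coeff_qpoch_poly_nonzero_le)

lemma combine_presentations:
  fixes x y :: "'a::comm_ring_1"
  assumes "E = A1 * P + B1 * (y * Q)" and "E = A2 * (x * P) + B2 * Q"
  shows "(x + (1 - x) * y) * E = (A1 + (1 - x) * y * A2) * (x * P) + (x * B1 + (1 - x) * B2) * (y * Q)"
proof -
  have "x * E = x * (A1 * P + B1 * (y * Q))" and "(1 - x) * y * E = (1 - x) * y * (A2 * (x * P) + B2 * Q)"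
    using assms by simp_all
  then show ?thesis by (simp add: algebra_simps)
qed

lemma qpoch2_X2Y2_decomposition:
  fixes q :: "'a::field"
  assumes "q \<noteq> 0" and "1 \<le> a + b"
  shows "\<exists>A B. qpoch2 q (X2 * Y2) (e + f) (a + b - 1) = A * qpoch2 q X2 e a + B * qpoch2 q Y2 f b
    \<and> supp2 A \<subseteq> {(s, t). t \<le> s \<and> s < b} \<and> supp2 B \<subseteq> {(s, t). t + b \<le> s \<and> s < a + b}"
  using assms(2)
proof (induction "a + b" arbitrary: a b e f rule: less_induct)
  case less
  consider "a = 0" | "b = 0" | a' b' where "a = Suc a'" "b = Suc b'"
    using not0_implies_Suc by blast
  then show ?case
  proof cases
    case 1
    then show ?thesis
      using supp2_qpoch2_X2Y2[of q "e + f" "b - 1"] less.prems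
      by (intro exI[of _ "qpoch2 q (X2 * Y2) (e + f) (a + b - 1)"] exI[of _ 0]) (auto simp: supp2_def)
  next
    case 2
    then show ?thesis
      using supp2_qpoch2_X2Y2[of q "e + f" "a - 1"] less.prems
      by (intro exI[of _ 0] exI[of _ "qpoch2 q (X2 * Y2) (e + f) (a + b - 1)"]) (auto simp: supp2_def)
  next
    case 3
    define u v where "u = const2 (q powi e)" and "v = const2 (q powi f)"
    define x y where "x = 1 - u * X2" and "y = 1 - v * Y2"
    define P Q where "P = qpoch2 q X2 (e + 2) a'" and "Q = qpoch2 q Y2 (f + 2) b'"
    define E where "E = qpoch2 q (X2 * Y2) (e + f + 2) (a' + b')"
    have P: "qpoch2 q X2 e a = x * P" and Q: "qpoch2 q Y2 f b = y * Q"
      using 3 by (simp_all add: P_def Q_def x_def y_def u_def v_def qpoch2_Suc_shift)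
    have E_shifts: "E = qpoch2 q (X2 * Y2) (e + 2 + f) (a' + b - 1)"
        "E = qpoch2 q (X2 * Y2) (e + (f + 2)) (a + b' - 1)"
      using 3 by (simp_all add: E_def ac_simps)
    obtain A1 B1 where E1: "E = A1 * P + B1 * (y * Q)"
      and A1: "supp2 A1 \<subseteq> {(s, t). t \<le> s \<and> s < b}"
      and B1: "supp2 B1 \<subseteq> {(s, t). t + b \<le> s \<and> s < a' + b}"
      using less.hyps[of a' b "e + 2" f] 3 unfolding E_shifts(1) P_def Q[symmetric] by auto
    obtain A2 B2 where E2: "E = A2 * (x * P) + B2 * Q"
      and A2: "supp2 A2 \<subseteq> {(s, t). t \<le> s \<and> s < b'}"
      and B2: "supp2 B2 \<subseteq> {(s, t). t + b' \<le> s \<and> s < a + b'}"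
      using less.hyps[of a b' e "f + 2"] 3 unfolding E_shifts(2) Q_def P[symmetric] by auto
    define A where "A = A1 + u * (X2 * A2) - u * (v * (X2 * (Y2 * A2)))"
    define B where "B = B1 - u * (X2 * B1) + u * (X2 * B2)"
    have "qpoch2 q (X2 * Y2) (e + f) (a + b - 1) = (x + (1 - x) * y) * E"
      using 3 assms(1)
      by (simp add: E_def x_def y_def u_def v_def const2_def qpoch2_Suc_shift power_int_add algebra_simps)
    also have "\<dots> = (A1 + (1 - x) * y * A2) * (x * P) + (x * B1 + (1 - x) * B2) * (y * Q)"
      by (rule combine_presentations[OF E1 E2])
    also have "\<dots> = A * qpoch2 q X2 e a + B * qpoch2 q Y2 f b"
      unfolding P Q by (simp add: A_def B_def x_def y_def algebra_simps)
    finally have eq: "qpoch2 q (X2 * Y2) (e + f) (a + b - 1) = A * qpoch2 q X2 e a + B * qpoch2 q Y2 f b" .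
    have "coeff2 A s t = 0" if "\<not> (t \<le> s \<and> s < b)" for s t
      using that 3 coeff2_eq_0_if_not_in_supp2[OF A1] coeff2_eq_0_if_not_in_supp2[OF A2]
      by (cases s; cases t) (simp_all add: A_def u_def v_def)
    moreover have "coeff2 B s t = 0" if "\<not> (t + b \<le> s \<and> s < a + b)" for s t
      using that 3 coeff2_eq_0_if_not_in_supp2[OF B1] coeff2_eq_0_if_not_in_supp2[OF B2]
      by (cases s) (auto simp: B_def u_def v_def)
    ultimately have "supp2 A \<subseteq> {(s, t). t \<le> s \<and> s < b}" "supp2 B \<subseteq> {(s, t). t + b \<le> s \<and> s < a + b}"
      by (auto simp: supp2_def)
    with eq show ?thesis by blast
  qed
qed

section \<open>Relations in \<open>V\<^sub>n\<close>\<close>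

lemma zero_in_V_iff:
  "zero_in_V n r v \<longleftrightarrow> (\<exists>G c. finite G \<and> (\<forall>p\<in>G. valid_rel n r (fst p) (snd p)) \<and>
      v = (\<lambda>b. \<Sum>p\<in>G. c p * rel_vec r (fst p) (snd p) b))"
  unfolding zero_in_V_def by (simp add: split_def fun_eq_iff)

lemma zero_in_V_0: "zero_in_V n r (\<lambda>_. 0)"
  unfolding zero_in_V_iff by (intro exI[of _ "{}"]) auto

lemma zero_in_V_rel_vec: "valid_rel n r a i \<Longrightarrow> zero_in_V n r (rel_vec r a i)"
  unfolding zero_in_V_iff by (intro exI[of _ "{(a, i)}"] exI[of _ "\<lambda>_. 1"]) auto

lemma zero_in_V_add:
  assumes "zero_in_V n r u" and "zero_in_V n r v"
  shows "zero_in_V n r (\<lambda>b. u b + v b)"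
proof -
  let ?R = "\<lambda>p. rel_vec r (fst p) (snd p)"
  obtain G1 c1 where G1: "finite G1" "\<forall>p\<in>G1. valid_rel n r (fst p) (snd p)"
    and u: "u = (\<lambda>b. \<Sum>p\<in>G1. c1 p * ?R p b)"
    using assms(1) unfolding zero_in_V_iff by blast
  obtain G2 c2 where G2: "finite G2" "\<forall>p\<in>G2. valid_rel n r (fst p) (snd p)"
    and v: "v = (\<lambda>b. \<Sum>p\<in>G2. c2 p * ?R p b)"
    using assms(2) unfolding zero_in_V_iff by blast
  have extend: "(\<Sum>p\<in>G. c p * ?R p b) = (\<Sum>p\<in>G1 \<union> G2. (if p \<in> G then c p else 0) * ?R p b)"
    if "G \<subseteq> G1 \<union> G2" for G c b
    using G1(1) G2(1) that by (intro sum.mono_neutral_cong_left) auto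
  let ?c = "\<lambda>p. (if p \<in> G1 then c1 p else 0) + (if p \<in> G2 then c2 p else 0)"
  have "u b + v b = (\<Sum>p\<in>G1 \<union> G2. ?c p * ?R p b)" for b
    using extend[of G1 c1 b] extend[of G2 c2 b] by (simp add: u v distrib_right sum.distrib)
  then show ?thesis
    unfolding zero_in_V_iff using G1 G2 by (intro exI[of _ "G1 \<union> G2"] exI[of _ ?c]) auto
qed

lemma zero_in_V_scale:
  assumes "zero_in_V n r v"
  shows "zero_in_V n r (\<lambda>b. k * v b)"
proof -
  obtain G c where "finite G" "\<forall>p\<in>G. valid_rel n r (fst p) (snd p)"
    and "v = (\<lambda>b. \<Sum>p\<in>G. c p * rel_vec r (fst p) (snd p) b)"
    using assms unfolding zero_in_V_iff by blast
  then show ?thesis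
    unfolding zero_in_V_iff
    by (intro exI[of _ G] exI[of _ "\<lambda>p. k * c p"]) (simp add: sum_distrib_left mult.assoc)
qed

lemma zero_in_V_sum:
  "finite I \<Longrightarrow> (\<And>i. i \<in> I \<Longrightarrow> zero_in_V n r (f i)) \<Longrightarrow> zero_in_V n r (\<lambda>b. \<Sum>i\<in>I. f i b)"
  by (induction I rule: finite_induct) (simp_all add: zero_in_V_0 zero_in_V_add)

definition transfer_rel :: "nat \<Rightarrow> nat list \<Rightarrow> nat \<Rightarrow> nat \<Rightarrow> nat list \<Rightarrow> qfield" where
  "transfer_rel L v i k b =
     (\<Sum>j\<le>L. (- 1) ^ j * qbinom (int L) j * (if b = v[i := v ! i - j, k := v ! k + j] then 1 else 0))"

lemma rel_vec_eq_transfer_rel: "rel_vec r a i = transfer_rel r a i (Suc i)"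
  by (simp add: fun_eq_iff rel_vec_def transfer_rel_def shift_def)

definition cons_vec :: "nat \<Rightarrow> (nat list \<Rightarrow> qfield) \<Rightarrow> nat list \<Rightarrow> qfield" where
  "cons_vec x v b = (case b of [] \<Rightarrow> 0 | h # t \<Rightarrow> if h = x then v t else 0)"

lemma transfer_rel_Cons: "transfer_rel L (x # v) (Suc i) (Suc k) = cons_vec x (transfer_rel L v i k)"
  by (auto simp: fun_eq_iff cons_vec_def transfer_rel_def split: list.split)

lemma zero_in_V_cons_vec:
  assumes "zero_in_V n r v"
  shows "zero_in_V (Suc n) r (cons_vec x v)"
proof -
  obtain G c where G: "finite G" "\<forall>p\<in>G. valid_rel n r (fst p) (snd p)"
    and v: "v = (\<lambda>b. \<Sum>p\<in>G. c p * rel_vec r (fst p) (snd p) b)"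
    using assms unfolding zero_in_V_iff by blast
  define h where "h p = (x # fst p, Suc (snd p))" for p :: "nat list \<times> nat"
  define c' where "c' p = c (tl (fst p), snd p - 1)" for p :: "nat list \<times> nat"
  have "inj_on h G" by (auto simp: h_def inj_on_def prod_eq_iff)
  then have "(\<Sum>p\<in>h ` G. c' p * rel_vec r (fst p) (snd p) b) = cons_vec x v b" for b
    unfolding sum.reindex[OF \<open>inj_on h G\<close>]
    by (simp add: v h_def c'_def rel_vec_eq_transfer_rel transfer_rel_Cons cons_vec_def sum_distrib_left split: list.split)
  moreover have "\<forall>p\<in>h ` G. valid_rel (Suc n) r (fst p) (snd p)"
    using G(2) by (auto simp: h_def valid_rel_def)
  ultimately show ?thesis
    unfolding zero_in_V_iff using G(1) by (intro exI[of _ "h ` G"] exI[of _ c']) auto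
qed

section \<open>Polynomials as formal combinations\<close>

text \<open>\<open>monom_symbol v s t\<close> is the symbol of \<open>X\<^sup>s Y\<^sup>t\<close>. It is only used for \<open>t \<le> s \<le> v ! 0\<close>,
  where none of the subtractions truncates; the box \<open>{..N} \<times> {..N}\<close> in \<open>poly_comb\<close> merely has to
  contain the supports of all polynomials involved.\<close>

definition monom_symbol :: "nat list \<Rightarrow> nat \<Rightarrow> nat \<Rightarrow> nat list" where
  "monom_symbol v s t = v[0 := v ! 0 - s, 1 := v ! 1 + s - t, length v - 1 := v ! (length v - 1) + t]"

definition poly_comb :: "nat \<Rightarrow> nat list \<Rightarrow> qfield poly poly \<Rightarrow> nat list \<Rightarrow> qfield" where
  "poly_comb N v p b = (\<Sum>(s, t)\<in>{..N} \<times> {..N}. coeff2 p s t * (if b = monom_symbol v s t then 1 else 0))"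

lemma poly_comb_add: "poly_comb N v (p + q) b = poly_comb N v p b + poly_comb N v q b"
  by (simp add: poly_comb_def distrib_right sum.distrib split_def)

lemma poly_comb_sum_const2_mult:
  "poly_comb N v (\<Sum>x\<in>I. const2 (k x) * p x) b = (\<Sum>x\<in>I. k x * poly_comb N v (p x) b)"
  unfolding poly_comb_def coeff2_sum coeff2_const2_mult sum_distrib_right sum_distrib_left mult.assoc
  by (simp only: split_def, rule sum.swap)

lemma zero_in_V_poly_comb_mult:
  assumes "supp2 C \<subseteq> {..N} \<times> {..N}"
    and "\<And>s t. (s, t) \<in> supp2 C \<Longrightarrow> zero_in_V n r (poly_comb N v (monom2 s t * P))"
  shows "zero_in_V n r (poly_comb N v (C * P))"
proof -
  have "C * P = (\<Sum>(s, t)\<in>{..N} \<times> {..N}. const2 (coeff2 C s t) * (monom2 s t * P))"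
    by (subst poly2_monom2_expansion[OF _ assms(1)]) (simp_all add: sum_distrib_right mult.assoc split_def)
  then have expand: "poly_comb N v (C * P)
      = (\<lambda>b. \<Sum>(s, t)\<in>{..N} \<times> {..N}. coeff2 C s t * poly_comb N v (monom2 s t * P) b)"
    by (simp add: fun_eq_iff poly_comb_sum_const2_mult split_def)
  have "zero_in_V n r (\<lambda>b. \<Sum>(s, t)\<in>{..N} \<times> {..N}. coeff2 C s t * poly_comb N v (monom2 s t * P) b)"
  proof (intro zero_in_V_sum, simp, clarify)
    fix s t
    show "zero_in_V n r (\<lambda>b. coeff2 C s t * poly_comb N v (monom2 s t * P) b)"
      using assms(2)[of s t] zero_in_V_0 zero_in_V_scale
      by (cases "coeff2 C s t = 0") (simp_all add: supp2_def)
  qed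
  with expand show ?thesis by simp
qed

lemma poly_comb_eq_transfer_rel:
  assumes "supp2 p \<subseteq> h ` {..L}" and "h ` {..L} \<subseteq> {..N} \<times> {..N}" and "inj_on h {..L}"
    and "\<And>j. j \<le> L \<Longrightarrow> coeff2 p (fst (h j)) (snd (h j)) = (- 1) ^ j * qbinom (int L) j"
    and "\<And>j. j \<le> L \<Longrightarrow> monom_symbol v (fst (h j)) (snd (h j)) = u[i := u ! i - j, k := u ! k + j]"
  shows "poly_comb N v p = transfer_rel L u i k"
proof
  fix b
  let ?g = "\<lambda>(s, t). coeff2 p s t * (if b = monom_symbol v s t then 1 else 0)"
  have "poly_comb N v p b = sum ?g (h ` {..L})"
    unfolding poly_comb_def using assms(2) coeff2_eq_0_if_not_in_supp2[OF assms(1)]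
    by (intro sum.mono_neutral_right) auto
  also have "\<dots> = (\<Sum>j\<le>L. ?g (h j))"
    using assms(3) by (simp add: sum.reindex)
  also have "\<dots> = transfer_rel L u i k b"
    unfolding transfer_rel_def using assms(4,5) by (intro sum.cong) (auto simp: split_def)
  finally show "poly_comb N v p b = transfer_rel L u i k b" .
qed

lemma monom_symbol_add_left:
  assumes "length v = Suc n" and "2 \<le> n" and "k \<le> i"
  shows "monom_symbol v (i + j) k = shift (monom_symbol v i k) 0 j"
  using assms by (intro nth_equalityI) (auto simp: monom_symbol_def shift_def nth_list_update)

lemma monom_symbol_add_right:
  assumes "length v = Suc n" and "2 \<le> n" and "k + j \<le> i"
  shows "monom_symbol v i (k + j)
    = (monom_symbol v i k)[1 := monom_symbol v i k ! 1 - j, n := monom_symbol v i k ! n + j]"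
  using assms by (intro nth_equalityI) (auto simp: monom_symbol_def nth_list_update)

lemma monom_symbol_diagonal:
  assumes "length v = Suc n" and "2 \<le> n"
  shows "monom_symbol v j j = v[0 := v ! 0 - j, n := v ! n + j]"
  using assms by (intro nth_equalityI) (auto simp: monom_symbol_def nth_list_update)

lemma poly_comb_monom2_mult_qpoch2_X2:
  assumes "length v = Suc n" and "2 \<le> n" and "k \<le> i" and "i + c \<le> N"
  shows "poly_comb N v (monom2 i k * qpoch2 qq X2 (1 - int c) c) = rel_vec c (monom_symbol v i k) 0"
  unfolding rel_vec_eq_transfer_rel
proof (rule poly_comb_eq_transfer_rel[where h = "\<lambda>j. (i + j, k)"])
  show "supp2 (monom2 i k * qpoch2 qq X2 (1 - int c) c) \<subseteq> (\<lambda>j. (i + j, k)) ` {..c}"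
    using supp2_qpoch2_X2 by (fastforce simp: supp2_monom2_mult)
  show "(\<lambda>j. (i + j, k)) ` {..c} \<subseteq> {..N} \<times> {..N}"
    using assms(3,4) by auto
qed (use assms in \<open>auto simp: inj_on_def coeff2_monom2_mult coeff2_qpoch2_X2 coeff_qpoch_poly_balanced
    monom_symbol_add_left shift_def\<close>)

lemma poly_comb_monom2_mult_qpoch2_Y2:
  assumes "length v = Suc n" and "2 \<le> n" and "k + c \<le> i" and "i \<le> N"
  shows "poly_comb N v (monom2 i k * qpoch2 qq Y2 (1 - int c) c) = transfer_rel c (monom_symbol v i k) 1 n"
proof (rule poly_comb_eq_transfer_rel[where h = "\<lambda>j. (i, k + j)"])
  show "supp2 (monom2 i k * qpoch2 qq Y2 (1 - int c) c) \<subseteq> (\<lambda>j. (i, k + j)) ` {..c}"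
    using supp2_qpoch2_Y2 by (fastforce simp: supp2_monom2_mult)
  show "(\<lambda>j. (i, k + j)) ` {..c} \<subseteq> {..N} \<times> {..N}"
    using assms(3,4) by auto
qed (use assms in \<open>auto simp: inj_on_def coeff2_monom2_mult coeff2_qpoch2_Y2 coeff_qpoch_poly_balanced
    monom_symbol_add_right\<close>)

lemma poly_comb_qpoch2_X2Y2:
  assumes "length v = Suc n" and "2 \<le> n"
  shows "poly_comb N v (qpoch2 qq (X2 * Y2) (1 - int N) N) = transfer_rel N v 0 n"
  by (rule poly_comb_eq_transfer_rel[where h = "\<lambda>j. (j, j)"])
     (use assms supp2_qpoch2_X2Y2[of qq "1 - int N" N] in
       \<open>auto simp: inj_on_def coeff2_qpoch2_X2Y2 coeff_qpoch_poly_balanced monom_symbol_diagonal\<close>)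

lemma zero_in_V_transfer_rel_step:
  assumes n: "2 \<le> n" and r: "1 \<le> r" and b: "1 \<le> b"
    and IH: "\<And>u. length u = n \<Longrightarrow> b \<le> u ! 0 \<Longrightarrow> zero_in_V n r (transfer_rel b u 0 (n - 1))"
    and v: "length v = Suc n" "r + b - 1 \<le> v ! 0"
  shows "zero_in_V (Suc n) r (transfer_rel (r + b - 1) v 0 n)"
proof -
  define N where "N = r + b - 1"
  obtain A B where decomp: "qpoch2 qq (X2 * Y2) (1 - int N) N
      = A * qpoch2 qq X2 (1 - int r) r + B * qpoch2 qq Y2 (1 - int b) b"
    and A: "supp2 A \<subseteq> {(s, t). t \<le> s \<and> s < b}"
    and B: "supp2 B \<subseteq> {(s, t). t + b \<le> s \<and> s < r + b}"
    using qpoch2_X2Y2_decomposition[OF qq_nonzero, of r b "1 - int r" "1 - int b"] r b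
    by (auto simp: N_def)
  have "zero_in_V (Suc n) r (poly_comb N v (A * qpoch2 qq X2 (1 - int r) r))"
  proof (rule zero_in_V_poly_comb_mult)
    show "supp2 A \<subseteq> {..N} \<times> {..N}"
      using A by (auto simp: N_def)
    fix i k
    assume "(i, k) \<in> supp2 A"
    then have "k \<le> i" "i + r \<le> N" using A by (auto simp: N_def)
    moreover have "valid_rel (Suc n) r (monom_symbol v i k) 0"
      using v n \<open>i + r \<le> N\<close> by (simp add: valid_rel_def monom_symbol_def nth_list_update N_def)
    ultimately show "zero_in_V (Suc n) r (poly_comb N v (monom2 i k * qpoch2 qq X2 (1 - int r) r))"
      using v n by (simp add: poly_comb_monom2_mult_qpoch2_X2 zero_in_V_rel_vec)
  qed
  moreover have "zero_in_V (Suc n) r (poly_comb N v (B * qpoch2 qq Y2 (1 - int b) b))"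
  proof (rule zero_in_V_poly_comb_mult)
    show "supp2 B \<subseteq> {..N} \<times> {..N}"
      using B by (auto simp: N_def)
    fix i k
    assume "(i, k) \<in> supp2 B"
    then have ik: "k + b \<le> i" "i \<le> N" using B by (auto simp: N_def)
    obtain x u where xu: "monom_symbol v i k = x # u"
      using v by (cases "monom_symbol v i k") (auto simp: monom_symbol_def)
    have "length (monom_symbol v i k) = Suc n" "monom_symbol v i k ! 1 = v ! 1 + i - k"
      using v n by (simp_all add: monom_symbol_def nth_list_update)
    then have "length u = n" "b \<le> u ! 0"
      using xu ik by auto
    then have "zero_in_V (Suc n) r (cons_vec x (transfer_rel b u 0 (n - 1)))"
      by (intro zero_in_V_cons_vec IH)
    then show "zero_in_V (Suc n) r (poly_comb N v (monom2 i k * qpoch2 qq Y2 (1 - int b) b))"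
      using v n ik xu by (simp add: poly_comb_monom2_mult_qpoch2_Y2 transfer_rel_Cons[symmetric])
  qed
  ultimately have "zero_in_V (Suc n) r (poly_comb N v (qpoch2 qq (X2 * Y2) (1 - int N) N))"
    unfolding decomp poly_comb_add by (rule zero_in_V_add)
  with v n show ?thesis by (simp add: poly_comb_qpoch2_X2Y2 N_def)
qed

theorem zero_in_V_transfer_rel_first_last:
  assumes "2 \<le> n" and "2 \<le> r" and "length v = n" and "(n - 1) * (r - 1) + 1 \<le> v ! 0"
  shows "zero_in_V n r (transfer_rel ((n - 1) * (r - 1) + 1) v 0 (n - 1))"
  using assms(1,3,4)
proof (induction n arbitrary: v rule: nat_induct_at_least)
  case base
  with assms(2) have "valid_rel 2 r v 0" by (simp add: valid_rel_def)
  with assms(2) show ?case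
    using zero_in_V_rel_vec by (simp add: rel_vec_eq_transfer_rel)
next
  case (Suc m)
  obtain m' r' where "m = Suc m'" and "r = Suc r'"
    using Suc.hyps assms(2) not0_implies_Suc by fastforce
  then have "(Suc m - 1) * (r - 1) + 1 = r + ((m - 1) * (r - 1) + 1) - 1" by simp
  with Suc assms(2) show ?case
    by (simp only: diff_Suc_1) (rule zero_in_V_transfer_rel_step; simp)
qed

lemma transfer_rel_first_last_replicate:
  assumes "2 \<le> n"
  shows "transfer_rel L (x # replicate (n - 1) 0) 0 (n - 1) b
    = (\<Sum>j\<le>L. (- 1) ^ j * qbinom (int L) j * (if b = [x - j] @ replicate (n - 2) 0 @ [j] then 1 else 0))"
proof -
  obtain n' where n': "n = Suc (Suc n')"
    using assms by (metis add_2_eq_Suc le_Suc_ex)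
  have "replicate (Suc n') (0::nat) = replicate n' 0 @ [0]"
    by (simp add: replicate_append_same)
  then show ?thesis
    by (simp add: transfer_rel_def n' list_update_append nth_append)
qed

lemma sum_alternating_qbinom_reflect:
  "(\<Sum>k\<le>L. (- 1) ^ k * qbinom (int L) k * f k (L - k))
     = (- 1) ^ L * (\<Sum>j\<le>L. (- 1) ^ j * qbinom (int L) j * f (L - j) j)"
proof -
  have "(\<Sum>k\<le>L. (- 1) ^ k * qbinom (int L) k * f k (L - k))
      = (\<Sum>j\<le>L. (- 1) ^ (L - j) * qbinom (int L) (L - j) * f (L - j) (L - (L - j)))"
    using sum.atLeastAtMost_rev[of "\<lambda>k. (- 1) ^ k * qbinom (int L) k * f k (L - k)" 0 L]
    by (simp add: atLeast0AtMost)
  also have "\<dots> = (\<Sum>j\<le>L. (- 1) ^ L * ((- 1) ^ j * qbinom (int L) j * f (L - j) j))"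
  proof (intro sum.cong refl)
    fix j
    assume "j \<in> {..L}"
    then have "(- 1 :: qfield) ^ L = (- 1) ^ (L - j) * (- 1) ^ j"
      by (simp add: power_add[symmetric])
    then have "(- 1 :: qfield) ^ (L - j) = (- 1) ^ L * (- 1) ^ j"
      by (simp add: mult.assoc power_mult_distrib[symmetric])
    with \<open>j \<in> {..L}\<close> show "(- 1) ^ (L - j) * qbinom (int L) (L - j) * f (L - j) (L - (L - j))
        = (- 1) ^ L * ((- 1) ^ j * qbinom (int L) j * f (L - j) j)"
      by (simp add: qbinom_symmetric)
  qed
  finally show ?thesis by (simp add: sum_distrib_left)
qed

theorem proposition5p11:
  fixes n r L :: nat
  assumes "n \<ge> 2" and "r \<ge> 2" and "L = (n - 1) * (r - 1) + 1"
  shows "zero_in_V n r (\<lambda>b. \<Sum>k\<le>L. (-1) ^ k * qbinom (int L) k *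
            (if b = [k] @ replicate (n - 2) 0 @ [L - k] then 1 else 0))"
proof -
  define v where "v = L # replicate (n - 1) 0"
  have "zero_in_V n r (transfer_rel L v 0 (n - 1))"
    using zero_in_V_transfer_rel_first_last[of n r v] assms by (simp add: v_def)
  then have "zero_in_V n r (\<lambda>b. (- 1) ^ L * transfer_rel L v 0 (n - 1) b)"
    by (rule zero_in_V_scale)
  moreover have "(- 1) ^ L * transfer_rel L v 0 (n - 1) b
      = (\<Sum>k\<le>L. (-1) ^ k * qbinom (int L) k * (if b = [k] @ replicate (n - 2) 0 @ [L - k] then 1 else 0))" for b
    unfolding v_def transfer_rel_first_last_replicate[OF assms(1)]
    by (rule sum_alternating_qbinom_reflect[where f = "\<lambda>x y. if b = [x] @ replicate (n - 2) 0 @ [y] then 1 else 0", symmetric])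
  ultimately show ?thesis by simp
qed

end
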